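(* For a prime $p$ let $F_{pt}:\mathbb{F}_p^2\to\mathbb{F}_p^2$ be the map $F_{pt}(x,y)=(x^3y(x-y),\;xy^3(x-y))$, where $\mathbb{F}_p=\mathbb{Z}/p\mathbb{Z}$. Then: (1) if $p=2^k+1$ for some integer $k\ge 0$, the $(k+1)$-st iterate $F_{pt}^{\circ(k+1)}$ sends every point of $\mathbb{F}_p^2$ to $(0,0)$; (2) for an arbitrary prime $p$, there exists $N\ge1$ such that $F_{pt}^{\circ N}(x,y)=(0,0)$ for every pair $(x,y)\in\mathbb{F}_p^2$ such that either $x=0$, or $y=0$, or $x\neq0$ and $y/x$ has order a power of $2$ in the group $(\mathbb{Z}/p\mathbb{Z})^*$.
   Context: $F_{pt}$ is the reduction modulo $p$ of the integer polynomial map $(x,y)\mapsto(x^3y(x-y),\,xy^3(x-y))$ (called the "power trap"); $F_{pt}^{\circ n}$ denotes its $n$-fold composition with itself. *)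

theory Defs
  imports "HOL-Number_Theory.Number_Theory"
begin

text \<open>Elements of F_p are represented by their canonical representatives 0..p-1 (as naturals).\<close>

definition F_pt :: "nat \<Rightarrow> nat \<times> nat \<Rightarrow> nat \<times> nat" where
  "F_pt p xy = (case xy of (x, y) \<Rightarrow>
     (nat ((int x ^ 3 * int y * (int x - int y)) mod int p),
      nat ((int x * int y ^ 3 * (int x - int y)) mod int p)))"

end

theory Submission
  imports Defs
begin

text \<open>Modulo \<open>p\<close>, the power trap maps \<open>(c X, c Y)\<close> to \<open>c' (X^2, Y^2)\<close> with
  \<open>c' = c^5 X Y (X - Y)\<close>, so after \<open>t\<close> steps \<open>(x, y)\<close> has become a multiple of
  \<open>(x^(2^t), y^(2^t))\<close>. Once \<open>x^(2^j) \<equiv> y^(2^j)\<close> the two coordinates agree, the factor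
  \<open>x - y\<close> kills the next image, and \<open>(0, 0)\<close> is a fixed point. For \<open>p = 2^k + 1\<close> Fermat's
  little theorem gives \<open>x^(2^k) \<equiv> 1 \<equiv> y^(2^k)\<close>; if \<open>y \<equiv> r x\<close> with \<open>r\<close> of order \<open>2^j\<close>,
  then \<open>x^(2^j) \<equiv> y^(2^j)\<close>, and \<open>j < 2^j \<le> p - 1\<close> bounds the number of steps uniformly by \<open>p\<close>.\<close>

lemma funpow_absorbing_fixed_point:
  assumes "f a = a" and "(f ^^ m) z = a" and "m \<le> n"
  shows "(f ^^ n) z = a"
proof -
  obtain d where n: "n = d + m" using \<open>m \<le> n\<close> by (metis le_add_diff_inverse2)
  have "(f ^^ d) a = a" for d by (induction d) (simp_all add: assms(1))
  then show ?thesis by (simp add: n funpow_add assms(2))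
qed

lemma F_pt_fst_cong:
  assumes "p > 0"
  shows "[int (fst (F_pt p (a, b))) = int a ^ 3 * int b * (int a - int b)] (mod int p)"
  using assms by (simp add: F_pt_def cong_def)

lemma F_pt_snd_cong:
  assumes "p > 0"
  shows "[int (snd (F_pt p (a, b))) = int a * int b ^ 3 * (int a - int b)] (mod int p)"
  using assms by (simp add: F_pt_def cong_def)

lemma F_pt_zero: "F_pt p (0, 0) = (0, 0)"
  by (simp add: F_pt_def)

lemma F_pt_on_axes: "x = 0 \<or> y = 0 \<Longrightarrow> F_pt p (x, y) = (0, 0)"
  by (auto simp: F_pt_def)

lemma F_pt_diagonal:
  assumes "p > 0" and "[int a = int b] (mod int p)"
  shows "F_pt p (a, b) = (0, 0)"
proof -
  have "[int a - int b = 0] (mod int p)"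
    using assms(2) by (metis cong_diff cong_refl diff_self)
  then have "[int a ^ 3 * int b * (int a - int b) = 0] (mod int p)"
    and "[int a * int b ^ 3 * (int a - int b) = 0] (mod int p)"
    using cong_mult[OF cong_refl] by fastforce+
  then show ?thesis by (simp add: F_pt_def cong_def)
qed

lemma F_pt_scaled:
  assumes "p > 0" and a: "[int a = c * X] (mod int p)" and b: "[int b = c * Y] (mod int p)"
  shows "[int (fst (F_pt p (a, b))) = c ^ 5 * X * Y * (X - Y) * X ^ 2] (mod int p)"
    and "[int (snd (F_pt p (a, b))) = c ^ 5 * X * Y * (X - Y) * Y ^ 2] (mod int p)"
proof -
  have "[int a ^ 3 * int b * (int a - int b) = (c * X) ^ 3 * (c * Y) * (c * X - c * Y)] (mod int p)"
    and "[int a * int b ^ 3 * (int a - int b) = (c * X) * (c * Y) ^ 3 * (c * X - c * Y)] (mod int p)"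
    by (intro cong_mult cong_pow cong_diff a b)+
  moreover have "(c * X) ^ 3 * (c * Y) * (c * X - c * Y) = c ^ 5 * X * Y * (X - Y) * X ^ 2"
    and "(c * X) * (c * Y) ^ 3 * (c * X - c * Y) = c ^ 5 * X * Y * (X - Y) * Y ^ 2"
    by (simp_all add: algebra_simps power2_eq_square power3_eq_cube numeral_eq_Suc)
  ultimately show "[int (fst (F_pt p (a, b))) = c ^ 5 * X * Y * (X - Y) * X ^ 2] (mod int p)"
    and "[int (snd (F_pt p (a, b))) = c ^ 5 * X * Y * (X - Y) * Y ^ 2] (mod int p)"
    using cong_trans[OF F_pt_fst_cong[OF \<open>p > 0\<close>]] cong_trans[OF F_pt_snd_cong[OF \<open>p > 0\<close>]]
    by simp_all
qed

lemma funpow_F_pt_scaled_powers: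
  assumes "p > 0"
  shows "\<exists>c. [int (fst ((F_pt p ^^ t) (x, y))) = c * int x ^ 2 ^ t] (mod int p) \<and>
             [int (snd ((F_pt p ^^ t) (x, y))) = c * int y ^ 2 ^ t] (mod int p)"
proof (induction t)
  case 0
  show ?case by (auto intro!: exI[of _ 1])
next
  case (Suc t)
  then obtain c a b where ab: "(F_pt p ^^ t) (x, y) = (a, b)"
    and "[int a = c * int x ^ 2 ^ t] (mod int p)" and "[int b = c * int y ^ 2 ^ t] (mod int p)"
    by (metis prod.collapse)
  from F_pt_scaled[OF assms this(2,3)] ab show ?case
    by (auto simp: power_mult[symmetric] mult.commute[of _ 2])
qed

lemma funpow_F_pt_vanishes:
  assumes "p > 0" and "[x ^ 2 ^ j = y ^ 2 ^ j] (mod p)" and "j < n"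
  shows "(F_pt p ^^ n) (x, y) = (0, 0)"
proof -
  obtain c a b where ab: "(F_pt p ^^ j) (x, y) = (a, b)"
    and a: "[int a = c * int x ^ 2 ^ j] (mod int p)" and b: "[int b = c * int y ^ 2 ^ j] (mod int p)"
    using funpow_F_pt_scaled_powers[OF \<open>p > 0\<close>] by (metis prod.collapse)
  have "[int x ^ 2 ^ j = int y ^ 2 ^ j] (mod int p)"
    using assms(2) by (metis cong_int_iff of_nat_power)
  then have "[int a = int b] (mod int p)"
    using a b by (metis cong_scalar_left cong_sym cong_trans)
  then have "(F_pt p ^^ Suc j) (x, y) = (0, 0)"
    using F_pt_diagonal[OF \<open>p > 0\<close>] ab by simp
  then show ?thesis
    using funpow_absorbing_fixed_point[where f = "F_pt p", OF F_pt_zero] \<open>j < n\<close>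
    by (metis Suc_leI)
qed

lemma funpow_F_pt_vanishes_on_axes:
  assumes "x = 0 \<or> y = 0" and "n \<ge> 1"
  shows "(F_pt p ^^ n) (x, y) = (0, 0)"
  using funpow_absorbing_fixed_point[where f = "F_pt p" and m = 1, OF F_pt_zero] F_pt_on_axes[OF assms(1)] assms(2)
  by simp

lemma fermat_power_cong:
  fixes p x y :: nat
  assumes "prime p" and "0 < x" "x < p" and "0 < y" "y < p"
  shows "[x ^ (p - 1) = y ^ (p - 1)] (mod p)"
proof -
  have "\<not> p dvd x" "\<not> p dvd y" using assms(2-) by (auto dest: dvd_imp_le)
  then show ?thesis
    using fermat_theorem[OF \<open>prime p\<close>] by (metis cong_sym cong_trans)
qed

lemma two_power_order_cong:
  fixes p r x y :: nat
  assumes "[r * x = y] (mod p)" and "ord p r = 2 ^ j"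
  shows "[x ^ 2 ^ j = y ^ 2 ^ j] (mod p)"
proof -
  have "[(r * x) ^ 2 ^ j = x ^ 2 ^ j] (mod p)"
    using cong_mult[OF ord[of r p] cong_refl[of "x ^ 2 ^ j"]] assms(2)
    by (simp add: power_mult_distrib)
  then show ?thesis
    using cong_pow[OF assms(1)] by (metis cong_sym cong_trans)
qed

lemma two_power_order_exponent_bound:
  fixes p r :: nat
  assumes "prime p" and "ord p r = 2 ^ j"
  shows "j < p"
proof -
  have "coprime p r" using assms(2) ord_eq_0[of p r] by simp
  then have "2 ^ j dvd p - 1"
    using order_divides_totient[of p r] assms by (simp add: totient_prime)
  then have "2 ^ j \<le> p - 1"
    using prime_gt_1_nat[OF \<open>prime p\<close>] by (simp add: dvd_imp_le)
  then show ?thesis using less_exp[of j] by linarith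
qed

lemma funpow_F_pt_vanishes_Fermat_prime:
  assumes "prime p" and "p = 2 ^ k + 1" and "x < p" "y < p"
  shows "(F_pt p ^^ (k + 1)) (x, y) = (0, 0)"
proof (cases "x = 0 \<or> y = 0")
  case True
  then show ?thesis by (rule funpow_F_pt_vanishes_on_axes) simp
next
  case False
  then have "[x ^ 2 ^ k = y ^ 2 ^ k] (mod p)"
    using fermat_power_cong[OF \<open>prime p\<close>, of x y] assms(2-) by simp
  then show ?thesis
    by (rule funpow_F_pt_vanishes[OF prime_gt_0_nat[OF \<open>prime p\<close>]]) simp
qed

lemma funpow_F_pt_vanishes_two_power_order:
  assumes "prime p" and "[r * x = y] (mod p)" and "ord p r = 2 ^ j"
  shows "(F_pt p ^^ p) (x, y) = (0, 0)"
  using funpow_F_pt_vanishes[OF prime_gt_0_nat[OF \<open>prime p\<close>]] two_power_order_cong[OF assms(2,3)]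
    two_power_order_exponent_bound[OF assms(1,3)] by blast

theorem mainTheorem3:
  fixes p :: nat
  assumes "prime p"
  shows "(\<forall>k::nat. p = 2 ^ k + 1 \<longrightarrow>
            (\<forall>x<p. \<forall>y<p. (F_pt p ^^ (k + 1)) (x, y) = (0, 0)))
       \<and> (\<exists>N\<ge>1. \<forall>x<p. \<forall>y<p.
            (x = 0 \<or> y = 0 \<or>
             (x \<noteq> 0 \<and> (\<exists>r<p. [r * x = y] (mod p) \<and> (\<exists>j::nat. ord p r = 2 ^ j))))
            \<longrightarrow> (F_pt p ^^ N) (x, y) = (0, 0))"
proof (intro conjI allI impI exI[of _ p])
  show "1 \<le> p" using prime_ge_1_nat[OF assms] .
  fix x y assume "x < p" "y < p" and "x = 0 \<or> y = 0 \<or>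
      (x \<noteq> 0 \<and> (\<exists>r<p. [r * x = y] (mod p) \<and> (\<exists>j::nat. ord p r = 2 ^ j)))"
  then show "(F_pt p ^^ p) (x, y) = (0, 0)"
    using funpow_F_pt_vanishes_on_axes \<open>1 \<le> p\<close> funpow_F_pt_vanishes_two_power_order[OF assms]
    by blast
qed (use funpow_F_pt_vanishes_Fermat_prime[OF assms] in blast)

end
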